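(* A regular Hausdorff space $X$ is $c$-semi-stratifiable if and only if $\mathcal{F}(X)$ is $c$-semi-stratifiable.
   Context: $\mathcal{F}(X)$ is the set of nonempty finite subsets of $X$ with the Vietoris topology (base: $\langle U_1,\dots,U_k\rangle=\{A: A\subset\bigcup_i U_i,\ A\cap U_j\neq\emptyset\ \forall j\}$, $U_i$ open in $X$). A space $Y$ is $c$-semi-stratifiable if to every compact $C\subset Y$ one can assign a sequence $\{G(n,C)\}_{n\in\omega}$ of open subsets of $Y$ such that (1) $C=\bigcap_{n\in\omega}G(n,C)$, and (2) if $C\subset F$ with $C,F$ compact, then $G(n,C)\subset G(n,F)$ for all $n$. *)

theory Defs
  imports "HOL-Analysis.Analysis"
begin

definition fin_subsets :: "'a topology \<Rightarrow> 'a set set" where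
  "fin_subsets X = {A. finite A \<and> A \<noteq> {} \<and> A \<subseteq> topspace X}"

definition vietoris_box :: "'a set list \<Rightarrow> 'a set set" where
  "vietoris_box Us = {A. finite A \<and> A \<noteq> {} \<and> A \<subseteq> \<Union>(set Us) \<and> (\<forall>U\<in>set Us. A \<inter> U \<noteq> {})}"

definition FinVietoris :: "'a topology \<Rightarrow> 'a set topology" where
  "FinVietoris X = topology_generated_by
     {vietoris_box Us | Us. Us \<noteq> [] \<and> (\<forall>U\<in>set Us. openin X U)}"

definition c_semi_stratifiable :: "'b topology \<Rightarrow> bool" where
  "c_semi_stratifiable Y \<longleftrightarrow>
     (\<exists>G :: nat \<Rightarrow> 'b set \<Rightarrow> 'b set.
        (\<forall>C. compactin Y C \<longrightarrow> (\<forall>n. openin Y (G n C)) \<and> C = (\<Inter>n. G n C)) \<and>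
        (\<forall>C F. compactin Y C \<and> compactin Y F \<and> C \<subseteq> F \<longrightarrow> (\<forall>n. G n C \<subseteq> G n F)))"

end

theory Submission
  imports Defs
begin

(* The map x \<mapsto> {x} embeds X continuously and injectively into F(X), and
   c-semi-stratifiability passes to such subspaces.

   Conversely, let G be a c-semi-stratification of X, which may be taken decreasing in n.
   To a compact K \<subseteq> F(X) assign the open sets \<Union>{<G(n,B), G(n,{b}) : b \<in> B> : B \<in> K}.
   If A \<notin> K, each B \<in> K either misses a point a \<in> A or has a point b \<notin> A.  Separating
   that point from the finite set B (resp. A) by disjoint open sets and applying G to the
   compact part of \<Union>K outside them, A is excluded from the n-th box of every B' in a
   Vietoris neighbourhood of B, for some n; compactness of K makes n uniform. *)

lemma openin_FinVietoris_vietoris_box: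
  assumes "Us \<noteq> []" and "\<And>U. U \<in> set Us \<Longrightarrow> openin X U"
  shows "openin (FinVietoris X) (vietoris_box Us)"
  unfolding FinVietoris_def
  by (rule topology_generated_by_Basis) (use assms in blast)

lemma vietoris_box_single: "vietoris_box [U] = {A. finite A \<and> A \<noteq> {} \<and> A \<subseteq> U}"
  unfolding vietoris_box_def by auto

lemma topspace_FinVietoris: "topspace (FinVietoris X) = fin_subsets X"
proof
  show "topspace (FinVietoris X) \<subseteq> fin_subsets X"
  proof
    fix A assume "A \<in> topspace (FinVietoris X)"
    then obtain Us where "\<forall>U\<in>set Us. openin X U" "A \<in> vietoris_box Us"
      unfolding FinVietoris_def topology_generated_by_topspace by blast
    moreover from this(1) have "\<Union>(set Us) \<subseteq> topspace X"
      by (auto dest: openin_subset)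
    ultimately show "A \<in> fin_subsets X"
      unfolding vietoris_box_def fin_subsets_def by blast
  qed
  have "fin_subsets X = vietoris_box [topspace X]"
    unfolding vietoris_box_single fin_subsets_def ..
  moreover have "openin (FinVietoris X) (vietoris_box [topspace X])"
    by (rule openin_FinVietoris_vietoris_box) auto
  ultimately show "fin_subsets X \<subseteq> topspace (FinVietoris X)"
    by (simp add: openin_subset)
qed

lemma fin_subsets_imp_compactin: "B \<in> fin_subsets X \<Longrightarrow> compactin X B"
  by (simp add: fin_subsets_def finite_imp_compactin)

lemma compactin_FinVietoris_subset: "compactin (FinVietoris X) K \<Longrightarrow> K \<subseteq> fin_subsets X"
  using compactin_subset_topspace by (metis topspace_FinVietoris)

lemma compactin_FinVietoris_imp_compactin_Union:
  assumes K: "compactin (FinVietoris X) K"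
  shows "compactin X (\<Union>K)"
  unfolding compactin_def
proof (intro conjI allI impI)
  have K_fin: "K \<subseteq> fin_subsets X"
    using K by (rule compactin_FinVietoris_subset)
  then show "\<Union>K \<subseteq> topspace X"
    by (auto simp: fin_subsets_def)
  fix \<U> assume \<U>: "(\<forall>U\<in>\<U>. openin X U) \<and> \<Union>K \<subseteq> \<Union>\<U>"
  define box_of :: "'a set set \<Rightarrow> 'a set set" where "box_of \<V> = vietoris_box [\<Union>\<V>]" for \<V>
  define \<S> where "\<S> = {\<V>. finite \<V> \<and> \<V> \<subseteq> \<U>}"
  have "openin (FinVietoris X) W" if "W \<in> box_of ` \<S>" for W
    using that \<U> unfolding box_of_def \<S>_def
    by (auto intro!: openin_FinVietoris_vietoris_box openin_Union simp: subset_iff)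
  moreover have "K \<subseteq> \<Union>(box_of ` \<S>)"
  proof
    fix B assume "B \<in> K"
    with K_fin \<U> have B: "finite B" "B \<noteq> {}" "\<forall>b\<in>B. \<exists>U\<in>\<U>. b \<in> U"
      by (auto simp: fin_subsets_def)
    then obtain h where h: "\<forall>b\<in>B. h b \<in> \<U> \<and> b \<in> h b"
      by metis
    with B have "h ` B \<in> \<S>" and "B \<in> box_of (h ` B)"
      by (auto simp: \<S>_def box_of_def vietoris_box_single)
    then show "B \<in> \<Union>(box_of ` \<S>)" by blast
  qed
  ultimately obtain \<F> where "finite \<F>" "\<F> \<subseteq> box_of ` \<S>" "K \<subseteq> \<Union>\<F>"
    using K unfolding compactin_def by (elim conjE allE impE) blast+
  then obtain \<T> where \<T>: "\<T> \<subseteq> \<S>" "finite \<T>" "K \<subseteq> \<Union>(box_of ` \<T>)"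
    by (metis finite_subset_image)
  show "\<exists>\<F>. finite \<F> \<and> \<F> \<subseteq> \<U> \<and> \<Union>K \<subseteq> \<Union>\<F>"
  proof (intro exI conjI)
    show "finite (\<Union>\<T>)" "\<Union>\<T> \<subseteq> \<U>"
      using \<T> by (auto simp: \<S>_def)
    show "\<Union>K \<subseteq> \<Union>(\<Union>\<T>)"
      using \<T>(3) by (fastforce simp: box_of_def vietoris_box_single)
  qed
qed

lemma continuous_map_singleton_FinVietoris: "continuous_map X (FinVietoris X) (\<lambda>x. {x})"
  unfolding FinVietoris_def
proof (rule continuous_on_generated_topo)
  fix W assume "W \<in> {vietoris_box Us |Us. Us \<noteq> [] \<and> (\<forall>U\<in>set Us. openin X U)}"
  then obtain Us where Us: "W = vietoris_box Us" "Us \<noteq> []" "\<forall>U\<in>set Us. openin X U"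
    by blast
  then have "set Us \<noteq> {}" by simp
  with Us(1) have "(\<lambda>x. {x}) -` W \<inter> topspace X = topspace X \<inter> \<Inter>(set Us)"
    by (auto simp: vietoris_box_def)
  moreover have "openin X (\<Inter>(set Us))"
    using Us by (intro openin_Inter) auto
  ultimately show "openin X ((\<lambda>x. {x}) -` W \<inter> topspace X)"
    by auto
next
  have "(\<lambda>x. {x}) ` topspace X \<subseteq> vietoris_box [topspace X]"
    by (auto simp: vietoris_box_single)
  moreover have "vietoris_box [topspace X] \<in> {vietoris_box Us |Us. Us \<noteq> [] \<and> (\<forall>U\<in>set Us. openin X U)}"
    by auto
  ultimately show "(\<lambda>x. {x}) ` topspace X \<subseteq> \<Union>{vietoris_box Us |Us. Us \<noteq> [] \<and> (\<forall>U\<in>set Us. openin X U)}"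
    by blast
qed

lemma c_semi_stratifiableI:
  fixes G :: "nat \<Rightarrow> 'a set \<Rightarrow> 'a set"
  assumes "\<And>C n. compactin Y C \<Longrightarrow> openin Y (G n C)"
    and "\<And>C. compactin Y C \<Longrightarrow> (\<Inter>n. G n C) = C"
    and "\<And>C F n. compactin Y C \<Longrightarrow> compactin Y F \<Longrightarrow> C \<subseteq> F \<Longrightarrow> G n C \<subseteq> G n F"
  shows "c_semi_stratifiable Y"
  unfolding c_semi_stratifiable_def
  by (rule exI[of _ G]) (simp add: assms)

lemma c_semi_stratifiableE:
  fixes Y :: "'a topology"
  assumes "c_semi_stratifiable Y"
  obtains G :: "nat \<Rightarrow> 'a set \<Rightarrow> 'a set" where "\<And>C n. compactin Y C \<Longrightarrow> openin Y (G n C)"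
    and "\<And>C. compactin Y C \<Longrightarrow> (\<Inter>n. G n C) = C"
    and "\<And>C F n. compactin Y C \<Longrightarrow> compactin Y F \<Longrightarrow> C \<subseteq> F \<Longrightarrow> G n C \<subseteq> G n F"
proof -
  from assms obtain G :: "nat \<Rightarrow> 'a set \<Rightarrow> 'a set" where
    G: "\<forall>C. compactin Y C \<longrightarrow> (\<forall>n. openin Y (G n C)) \<and> C = (\<Inter>n. G n C)" and
    G_mono: "\<forall>C F. compactin Y C \<and> compactin Y F \<and> C \<subseteq> F \<longrightarrow> (\<forall>n. G n C \<subseteq> G n F)"
    unfolding c_semi_stratifiable_def by (elim exE conjE) (rule that)
  show thesis
  proof (rule that)
    show "openin Y (G n C)" if "compactin Y C" for C n
      using conjunct1[OF G[rule_format, OF that]] by simp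
    show "(\<Inter>n. G n C) = C" if "compactin Y C" for C
      using conjunct2[OF G[rule_format, OF that]] by (rule sym)
    show "G n C \<subseteq> G n F" if "compactin Y C" "compactin Y F" "C \<subseteq> F" for C F n
      using G_mono that by blast
  qed
qed

lemma c_semi_stratifiable_continuous_injective:
  fixes X :: "'a topology" and Y :: "'b topology"
  assumes Y: "c_semi_stratifiable Y"
    and f: "continuous_map X Y f" "inj_on f (topspace X)"
  shows "c_semi_stratifiable X"
proof -
  obtain H :: "nat \<Rightarrow> 'b set \<Rightarrow> 'b set" where
    H_open: "\<And>C n. compactin Y C \<Longrightarrow> openin Y (H n C)" and
    H_Inter: "\<And>C. compactin Y C \<Longrightarrow> (\<Inter>n. H n C) = C" and
    H_mono: "\<And>C F n. compactin Y C \<Longrightarrow> compactin Y F \<Longrightarrow> C \<subseteq> F \<Longrightarrow> H n C \<subseteq> H n F"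
    using Y by (rule c_semi_stratifiableE) (rule that)
  define G where "G n C = {x \<in> topspace X. f x \<in> H n (f ` C)}" for n C
  have fC: "compactin Y (f ` C)" if "compactin X C" for C
    using image_compactin[OF that f(1)] .
  show ?thesis
  proof (rule c_semi_stratifiableI)
    show "openin X (G n C)" if "compactin X C" for C n
      unfolding G_def using f(1) H_open[OF fC[OF that]] by (rule openin_continuous_map_preimage)
    show "(\<Inter>n. G n C) = C" if C: "compactin X C" for C
    proof -
      have C_sub: "C \<subseteq> topspace X"
        using C by (rule compactin_subset_topspace)
      have "(\<Inter>n. G n C) = {x \<in> topspace X. f x \<in> (\<Inter>n. H n (f ` C))}"
        unfolding G_def by auto
      also have "\<dots> = {x \<in> topspace X. f x \<in> f ` C}"
        by (simp only: H_Inter[OF fC[OF C]])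
      also have "\<dots> = C"
        using C_sub inj_on_image_mem_iff[OF f(2)] by auto
      finally show ?thesis .
    qed
    show "G n C \<subseteq> G n F" if "compactin X C" "compactin X F" "C \<subseteq> F" for C F n
      using H_mono[OF fC[OF that(1)] fC[OF that(2)] image_mono[OF that(3)]]
      unfolding G_def by blast
  qed
qed

lemma compactin_uniform_index:
  fixes P :: "nat \<Rightarrow> 'a \<Rightarrow> bool"
  assumes K: "compactin X K"
    and locally: "\<And>x. x \<in> K \<Longrightarrow> \<exists>V n. openin X V \<and> x \<in> V \<and> (\<forall>y\<in>K \<inter> V. P n y)"
    and mono: "\<And>m n y. m \<le> n \<Longrightarrow> P m y \<Longrightarrow> P n y"
  shows "\<exists>N. \<forall>y\<in>K. P N y"
proof -
  obtain V n where V: "\<And>x. x \<in> K \<Longrightarrow> openin X (V x) \<and> x \<in> V x \<and> (\<forall>y\<in>K \<inter> V x. P (n x) y)"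
    using locally by metis
  have "\<forall>W\<in>V ` K. openin X W" "K \<subseteq> \<Union>(V ` K)"
    using V by auto
  then obtain \<F> where "finite \<F>" "\<F> \<subseteq> V ` K" "K \<subseteq> \<Union>\<F>"
    using K unfolding compactin_def by (elim conjE allE impE) blast+
  then obtain F where F: "F \<subseteq> K" "finite F" "K \<subseteq> \<Union>(V ` F)"
    by (metis finite_subset_image)
  then obtain N where N: "\<And>x. x \<in> F \<Longrightarrow> n x \<le> N"
    by (metis finite_imageI finite_nat_set_iff_bounded_le imageI)
  have "P N y" if "y \<in> K" for y
  proof -
    from that F(3) obtain x where "x \<in> F" "y \<in> V x" by blast
    with that F(1) V N show ?thesis by (blast intro: mono)
  qed
  then show ?thesis by blast
qed

locale decreasing_c_stratification =
  fixes X :: "'a topology" and G :: "nat \<Rightarrow> 'a set \<Rightarrow> 'a set"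
  assumes openin_G: "compactin X C \<Longrightarrow> openin X (G n C)"
    and Inter_G: "compactin X C \<Longrightarrow> (\<Inter>n. G n C) = C"
    and G_mono: "compactin X C \<Longrightarrow> compactin X F \<Longrightarrow> C \<subseteq> F \<Longrightarrow> G n C \<subseteq> G n F"
    and G_antimono: "m \<le> n \<Longrightarrow> G n C \<subseteq> G m C"

lemma c_semi_stratifiable_imp_decreasing:
  fixes X :: "'a topology"
  assumes "c_semi_stratifiable X"
  obtains G where "decreasing_c_stratification X G"
proof -
  obtain G0 :: "nat \<Rightarrow> 'a set \<Rightarrow> 'a set" where
    G0_open: "\<And>C n. compactin X C \<Longrightarrow> openin X (G0 n C)" and
    G0_Inter: "\<And>C. compactin X C \<Longrightarrow> (\<Inter>n. G0 n C) = C" and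
    G0_mono: "\<And>C F n. compactin X C \<Longrightarrow> compactin X F \<Longrightarrow> C \<subseteq> F \<Longrightarrow> G0 n C \<subseteq> G0 n F"
    using assms by (rule c_semi_stratifiableE) (rule that)
  define G where "G n C = (\<Inter>m\<le>n. G0 m C)" for n C
  have "decreasing_c_stratification X G"
  proof
    show "openin X (G n C)" if "compactin X C" for n C
      unfolding G_def using G0_open[OF that] by (intro openin_Inter) auto
    show "(\<Inter>n. G n C) = C" if "compactin X C" for C
    proof -
      have "(\<Inter>n. G n C) = (\<Inter>n. G0 n C)"
        unfolding G_def by auto
      then show ?thesis
        using G0_Inter[OF that] by simp
    qed
    show "G n C \<subseteq> G n F" if "compactin X C" "compactin X F" "C \<subseteq> F" for n C F
      using G0_mono[OF that] unfolding G_def by blast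
    show "G n C \<subseteq> G m C" if "m \<le> n" for m n C
      using that unfolding G_def by auto
  qed
  then show thesis by (rule that)
qed

context decreasing_c_stratification
begin

lemma G_avoids_point:
  assumes "compactin X C" and "a \<notin> C"
  obtains n where "a \<notin> G n C"
  using assms Inter_G by blast

lemma G_avoids_finite:
  assumes C: "compactin X C" and "finite A" and "A \<inter> C = {}"
  obtains n where "A \<inter> G n C = {}"
proof -
  from assms(2,3) have "\<exists>n. A \<inter> G n C = {}"
  proof (induction A rule: finite_induct)
    case empty
    then show ?case by simp
  next
    case (insert a A)
    then obtain m where m: "A \<inter> G m C = {}" by blast
    obtain k where k: "a \<notin> G k C"
      using C insert.prems by (blast elim: G_avoids_point)
    have "insert a A \<inter> G (max m k) C = {}"
      using m k G_antimono[of m "max m k" C] G_antimono[of k "max m k" C] by auto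
    then show ?case by blast
  qed
  then show thesis using that by blast
qed

definition hyper_nbhd :: "nat \<Rightarrow> 'a set \<Rightarrow> 'a set set" where
  "hyper_nbhd n B = {A. finite A \<and> A \<noteq> {} \<and> A \<subseteq> G n B \<and> (\<forall>b\<in>B. A \<inter> G n {b} \<noteq> {})}"

lemma openin_hyper_nbhd:
  assumes B: "B \<in> fin_subsets X"
  shows "openin (FinVietoris X) (hyper_nbhd n B)"
proof -
  from B have B_cpt: "compactin X B" and "finite B"
    by (auto simp: fin_subsets_def fin_subsets_imp_compactin)
  then obtain bs where bs: "set bs = B"
    using finite_list by blast
  have G_single: "compactin X {b}" "G n {b} \<subseteq> G n B" if "b \<in> B" for b
    using that B B_cpt G_mono[of "{b}" B n] by (auto simp: fin_subsets_def)
  have "\<Union>(set (G n B # map (\<lambda>b. G n {b}) bs)) = G n B"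
    using bs G_single(2) by auto
  then have "hyper_nbhd n B = vietoris_box (G n B # map (\<lambda>b. G n {b}) bs)"
    using bs unfolding hyper_nbhd_def vietoris_box_def by auto
  moreover have "openin X U" if "U \<in> set (G n B # map (\<lambda>b. G n {b}) bs)" for U
    using that bs B_cpt G_single(1) openin_G by auto
  ultimately show ?thesis
    using openin_FinVietoris_vietoris_box[of "G n B # map (\<lambda>b. G n {b}) bs"] by simp
qed

lemma hyper_nbhd_subset: "B \<in> fin_subsets X \<Longrightarrow> hyper_nbhd n B \<subseteq> fin_subsets X"
  using openin_hyper_nbhd openin_subset topspace_FinVietoris by metis

lemma mem_hyper_nbhd_self:
  assumes B: "B \<in> fin_subsets X"
  shows "B \<in> hyper_nbhd n B"
proof -
  have "compactin X B" "\<And>b. b \<in> B \<Longrightarrow> compactin X {b}"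
    using B by (auto simp: fin_subsets_def finite_imp_compactin)
  then have "B \<subseteq> G n B" "\<And>b. b \<in> B \<Longrightarrow> b \<in> G n {b}"
    using Inter_G by blast+
  with B show ?thesis
    unfolding hyper_nbhd_def fin_subsets_def by blast
qed

lemma hyper_nbhd_antimono: "m \<le> n \<Longrightarrow> hyper_nbhd n B \<subseteq> hyper_nbhd m B"
  unfolding hyper_nbhd_def using G_antimono by blast

lemma G_avoids_point_near_finite:
  assumes X: "Hausdorff_space X" and S: "compactin X S" and B: "B \<in> fin_subsets X"
    and a: "a \<in> topspace X" "a \<notin> B"
  obtains V n where "openin X V" "B \<subseteq> V"
    "\<And>B'. B' \<in> fin_subsets X \<Longrightarrow> B' \<subseteq> S \<inter> V \<Longrightarrow> a \<notin> G n B'"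
proof -
  have "compactin X {a}" "compactin X B" "disjnt {a} B"
    using a B by (auto simp: fin_subsets_imp_compactin)
  then obtain U V where UV: "openin X U" "openin X V" "{a} \<subseteq> U" "B \<subseteq> V" "disjnt U V"
    by (rule Hausdorff_space_compact_separation[OF X])
  define C where "C = (topspace X - U) \<inter> S"
  have C: "compactin X C"
    unfolding C_def using UV(1) S by (intro closed_Int_compactin) auto
  moreover have "a \<notin> C"
    using UV(3) by (simp add: C_def)
  ultimately obtain n where n: "a \<notin> G n C"
    by (rule G_avoids_point)
  have far: "a \<notin> G n B'" if "B' \<in> fin_subsets X" "B' \<subseteq> S \<inter> V" for B'
  proof -
    have "B' \<subseteq> C"
      using that UV(5) by (auto simp: C_def fin_subsets_def disjnt_def)
    then show ?thesis
      using G_mono[OF fin_subsets_imp_compactin[OF that(1)] C] n by blast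
  qed
  show thesis
    using UV(2,4) far by (rule that)
qed

lemma G_avoids_finite_near_point:
  assumes X: "Hausdorff_space X" and S: "compactin X S" and A: "A \<in> fin_subsets X"
    and b: "b \<in> topspace X" "b \<notin> A"
  obtains U n where "openin X U" "b \<in> U" "\<And>b'. b' \<in> S \<inter> U \<Longrightarrow> A \<inter> G n {b'} = {}"
proof -
  have "compactin X {b}" "compactin X A" "disjnt {b} A"
    using b A by (auto simp: fin_subsets_imp_compactin)
  then obtain U V where UV: "openin X U" "openin X V" "{b} \<subseteq> U" "A \<subseteq> V" "disjnt U V"
    by (rule Hausdorff_space_compact_separation[OF X])
  define C where "C = (topspace X - V) \<inter> S"
  have C: "compactin X C"
    unfolding C_def using UV(2) S by (intro closed_Int_compactin) auto
  moreover have "finite A"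
    using A by (simp add: fin_subsets_def)
  moreover have "A \<inter> C = {}"
    using UV(4) by (auto simp: C_def)
  ultimately obtain n where n: "A \<inter> G n C = {}"
    by (rule G_avoids_finite)
  have far: "A \<inter> G n {b'} = {}" if "b' \<in> S \<inter> U" for b'
  proof -
    have "b' \<in> C"
      using that UV(5) openin_subset[OF UV(1)] by (auto simp: C_def disjnt_def)
    then have "G n {b'} \<subseteq> G n C"
      using C compactin_subset_topspace[OF C] by (intro G_mono) auto
    with n show ?thesis by blast
  qed
  have "b \<in> U"
    using UV(3) by simp
  with UV(1) show thesis
    using far by (rule that)
qed

lemma not_mem_hyper_nbhd_near:
  assumes X: "Hausdorff_space X" and K: "compactin (FinVietoris X) K"
    and A: "A \<in> fin_subsets X" "A \<notin> K" and B: "B \<in> K"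
  shows "\<exists>\<V> n. openin (FinVietoris X) \<V> \<and> B \<in> \<V> \<and> (\<forall>B'\<in>K \<inter> \<V>. A \<notin> hyper_nbhd n B')"
proof -
  have K_sub: "K \<subseteq> fin_subsets X"
    using K by (rule compactin_FinVietoris_subset)
  have S: "compactin X (\<Union>K)"
    using K by (rule compactin_FinVietoris_imp_compactin_Union)
  have B_fin: "B \<in> fin_subsets X"
    using B K_sub by blast
  from A(2) B consider a where "a \<in> A" "a \<notin> B" | b where "b \<in> B" "b \<notin> A"
    by (metis subsetI subset_antisym)
  then show ?thesis
  proof cases
    case (1 a)
    then have "a \<in> topspace X"
      using A(1) by (auto simp: fin_subsets_def)
    then obtain V n where V: "openin X V" "B \<subseteq> V"
      and far: "\<And>B'. B' \<in> fin_subsets X \<Longrightarrow> B' \<subseteq> \<Union>K \<inter> V \<Longrightarrow> a \<notin> G n B'"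
      using G_avoids_point_near_finite[OF X S B_fin _ 1(2)] by blast
    show ?thesis
    proof (intro exI conjI ballI)
      show "openin (FinVietoris X) (vietoris_box [V])"
        using V(1) by (intro openin_FinVietoris_vietoris_box) auto
      show "B \<in> vietoris_box [V]"
        using B_fin V(2) by (auto simp: vietoris_box_single fin_subsets_def)
      fix B' assume "B' \<in> K \<inter> vietoris_box [V]"
      then have "B' \<in> fin_subsets X" "B' \<subseteq> \<Union>K \<inter> V"
        using K_sub by (auto simp: vietoris_box_single)
      then show "A \<notin> hyper_nbhd n B'"
        using far 1(1) unfolding hyper_nbhd_def by blast
    qed
  next
    case (2 b)
    then have "b \<in> topspace X"
      using B_fin by (auto simp: fin_subsets_def)
    then obtain U n where U: "openin X U" "b \<in> U"
      and far: "\<And>b'. b' \<in> \<Union>K \<inter> U \<Longrightarrow> A \<inter> G n {b'} = {}"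
      using G_avoids_finite_near_point[OF X S A(1) _ 2(2)] by blast
    show ?thesis
    proof (intro exI conjI ballI)
      show "openin (FinVietoris X) (vietoris_box [topspace X, U])"
        using U(1) by (intro openin_FinVietoris_vietoris_box) auto
      show "B \<in> vietoris_box [topspace X, U]"
        using B_fin U(2) 2(1) by (auto simp: vietoris_box_def fin_subsets_def)
      fix B' assume B': "B' \<in> K \<inter> vietoris_box [topspace X, U]"
      then obtain b' where "b' \<in> B'" "b' \<in> U"
        by (auto simp: vietoris_box_def)
      with B' far have "A \<inter> G n {b'} = {}" by blast
      with \<open>b' \<in> B'\<close> show "A \<notin> hyper_nbhd n B'"
        unfolding hyper_nbhd_def by blast
    qed
  qed
qed

lemma Inter_hyper_nbhd:
  assumes X: "Hausdorff_space X" and K: "compactin (FinVietoris X) K"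
  shows "(\<Inter>n. \<Union>B\<in>K. hyper_nbhd n B) = K"
proof
  have K_sub: "K \<subseteq> fin_subsets X"
    using K by (rule compactin_FinVietoris_subset)
  then show "K \<subseteq> (\<Inter>n. \<Union>B\<in>K. hyper_nbhd n B)"
    using mem_hyper_nbhd_self by blast
  show "(\<Inter>n. \<Union>B\<in>K. hyper_nbhd n B) \<subseteq> K"
  proof
    fix A assume A: "A \<in> (\<Inter>n. \<Union>B\<in>K. hyper_nbhd n B)"
    then obtain B0 where "B0 \<in> K" "A \<in> hyper_nbhd 0 B0"
      by blast
    with K_sub have A_fin: "A \<in> fin_subsets X"
      using hyper_nbhd_subset by blast
    show "A \<in> K"
    proof (rule ccontr)
      assume "A \<notin> K"
      have "\<exists>N. \<forall>B\<in>K. A \<notin> hyper_nbhd N B"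
        using K
      proof (rule compactin_uniform_index)
        show "\<exists>\<V> n. openin (FinVietoris X) \<V> \<and> B \<in> \<V> \<and> (\<forall>B'\<in>K \<inter> \<V>. A \<notin> hyper_nbhd n B')"
          if "B \<in> K" for B
          using X K A_fin \<open>A \<notin> K\<close> that by (rule not_mem_hyper_nbhd_near)
        show "A \<notin> hyper_nbhd n B" if "m \<le> n" "A \<notin> hyper_nbhd m B" for m n B
          using that hyper_nbhd_antimono by blast
      qed
      with A show False by blast
    qed
  qed
qed

lemma c_semi_stratifiable_FinVietoris:
  assumes "Hausdorff_space X"
  shows "c_semi_stratifiable (FinVietoris X)"
proof (rule c_semi_stratifiableI)
  fix K n assume K: "compactin (FinVietoris X) K"
  then have "K \<subseteq> fin_subsets X"
    by (rule compactin_FinVietoris_subset)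
  then show "openin (FinVietoris X) (\<Union>B\<in>K. hyper_nbhd n B)"
    using openin_hyper_nbhd by blast
  show "(\<Inter>n. \<Union>B\<in>K. hyper_nbhd n B) = K"
    using assms K by (rule Inter_hyper_nbhd)
qed blast

end

theorem theorem4p9:
  fixes X :: "'a topology"
  assumes "regular_space X" and "Hausdorff_space X"
  shows "c_semi_stratifiable X \<longleftrightarrow> c_semi_stratifiable (FinVietoris X)"
proof
  assume "c_semi_stratifiable X"
  then obtain G where "decreasing_c_stratification X G"
    by (rule c_semi_stratifiable_imp_decreasing)
  then show "c_semi_stratifiable (FinVietoris X)"
    using assms(2) by (rule decreasing_c_stratification.c_semi_stratifiable_FinVietoris)
next
  assume "c_semi_stratifiable (FinVietoris X)"
  then show "c_semi_stratifiable X"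
    using continuous_map_singleton_FinVietoris
    by (rule c_semi_stratifiable_continuous_injective) simp
qed

end
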